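(* Let $k$ be odd and $m$ a positive integer. For $i=1,\dots,k$ let $A_i=(a_{i,1},a_{i,2},\dots,a_{i,m})$ be a sequence with entries from a two-element set of symbols, and let $P=(a_{1,1},a_{2,1},\dots,a_{k,1},a_{1,2},a_{2,2},\dots,a_{k,2},\dots,a_{1,m},\dots,a_{k,m})$. Then $f(P)\le (k-1)m+\min\{f(A_i):1\le i\le k\}$.
   Context: For a finite sequence $X=(x_1,\dots,x_M)$ of symbols from a two-element set, $f(X)=|\{i\in\{1,\dots,M\}: x_i\ne x_{i+1}\}|$, where $x_{M+1}=x_1$ (i.e. the number of cyclic changes of symbol). *)

theory Defs
  imports Main
begin

text \<open>Number of cyclic changes of symbol in a finite sequence (list) X = (x_1,...,x_M),
  with x_(M+1) = x_1. Symbols from a two-element set are modelled by bool.\<close>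
definition cyc_changes :: "bool list \<Rightarrow> nat" where
  "cyc_changes xs = card {i. i < length xs \<and> xs ! i \<noteq> xs ! ((i + 1) mod length xs)}"

end

theory Submission
  imports Defs
begin

(* P is one period of the (k m)-periodic sequence b t = a (t mod k) (t div k mod m).
   Count its changes from an offset r < k: the m windows of length k then start at
   b (j k + r) = a r j.  A window of odd length k holds at most k changes, and an even
   number of them if its two ends agree, hence at most k - 1 plus one if row r changes
   from column j to column j + 1.  Summing over j bounds f(P) by (k - 1) m + f(A_r)
   for every row r. *)

definition jump :: "(nat \<Rightarrow> bool) \<Rightarrow> nat \<Rightarrow> nat" where
  "jump g i = of_bool (g i \<noteq> g (Suc i))"

lemma cyc_changes_periodic:
  assumes periodic: "\<And>t. g (t + n) = g t"
  shows "cyc_changes (map g [0..<n]) = (\<Sum>i<n. jump g i)"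
proof -
  have wrap: "g (Suc i mod n) = g (Suc i)" if "i < n" for i
    using that periodic[of 0] by (cases "Suc i = n") auto
  have "{i. i < length (map g [0..<n]) \<and> map g [0..<n] ! i \<noteq> map g [0..<n] ! ((i + 1) mod length (map g [0..<n]))}
      = {..<n} \<inter> {i. g i \<noteq> g (Suc i)}"
    using wrap by auto
  then show ?thesis
    by (simp add: cyc_changes_def jump_def)
qed

lemma jump_periodic:
  assumes "\<And>t. g (t + n) = g t"
  shows "jump g (t + n) = jump g t"
  using assms[of t] assms[of "Suc t"] by (simp add: jump_def)

lemma sum_lessThan_shift_periodic:
  fixes h :: "nat \<Rightarrow> 'a::cancel_comm_monoid_add"
  assumes periodic: "\<And>t. h (t + n) = h t"
  shows "(\<Sum>i<n. h (i + r)) = (\<Sum>i<n. h i)"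
proof (induction r)
  case (Suc r)
  have "(\<Sum>i<n. h (i + r)) + h (n + r) = h r + (\<Sum>i<n. h (Suc i + r))"
    using sum.lessThan_Suc_shift[of "\<lambda>i. h (i + r)" n] by simp
  then have "(\<Sum>i<n. h (Suc i + r)) = (\<Sum>i<n. h (i + r))"
    using periodic[of r] by (simp add: add.commute)
  then show ?case
    using Suc by simp
qed simp

lemma sum_jump_mod_2:
  "(\<Sum>i\<in>{s..<s + k}. jump g i) mod 2 = of_bool (g s \<noteq> g (s + k))"
proof (induction k)
  case (Suc k)
  then show ?case
    by (cases "g s"; cases "g (s + k)"; cases "g (Suc (s + k))")
       (simp_all add: jump_def mod_Suc del: sum_of_bool_eq)
qed simp

lemma sum_jump_odd_window_le:
  assumes "odd k"
  shows "(\<Sum>i\<in>{s..<s + k}. jump g i) \<le> (k - 1) + of_bool (g s \<noteq> g (s + k))"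
proof -
  let ?S = "\<Sum>i\<in>{s..<s + k}. jump g i"
  have "?S \<le> (\<Sum>i\<in>{s..<s + k}. 1)"
    by (rule sum_mono) (simp add: jump_def)
  then have "?S \<le> k"
    by simp
  moreover have "?S \<noteq> k" if "g s = g (s + k)"
    using sum_jump_mod_2[where s = s and k = k and g = g] that assms by auto
  ultimately show ?thesis
    by (cases "g s = g (s + k)") auto
qed

lemma sum_jump_windows_le:
  assumes "odd k"
  shows "(\<Sum>i<m * k. jump g (i + r)) \<le> (k - 1) * m + (\<Sum>j<m. of_bool (g (j * k + r) \<noteq> g (Suc j * k + r)))"
proof -
  have "(\<Sum>i<m * k. jump g (i + r)) = (\<Sum>j<m. \<Sum>i\<in>{j * k..<j * k + k}. jump g (i + r))"
    by (rule sum.nat_group[symmetric])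
  also have "\<dots> = (\<Sum>j<m. \<Sum>i\<in>{j * k + r..<j * k + r + k}. jump g i)"
    by (simp add: sum.shift_bounds_nat_ivl[symmetric] add_ac)
  also have "\<dots> \<le> (\<Sum>j<m. (k - 1) + of_bool (g (j * k + r) \<noteq> g (Suc j * k + r)))"
  proof (rule sum_mono)
    fix j
    show "(\<Sum>i\<in>{j * k + r..<j * k + r + k}. jump g i) \<le> (k - 1) + of_bool (g (j * k + r) \<noteq> g (Suc j * k + r))"
      using sum_jump_odd_window_le[OF assms, where g = g and s = "j * k + r"] by (simp add: add_ac)
  qed
  also have "\<dots> = (k - 1) * m + (\<Sum>j<m. of_bool (g (j * k + r) \<noteq> g (Suc j * k + r)))"
    by (simp add: sum.distrib del: sum_of_bool_eq)
  finally show ?thesis .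
qed

lemma cyc_changes_interleave_le_row:
  fixes a :: "nat \<Rightarrow> nat \<Rightarrow> bool"
  assumes "odd k" and "r < k"
  shows "cyc_changes (map (\<lambda>t. a (t mod k) (t div k)) [0..<k * m])
     \<le> (k - 1) * m + cyc_changes (map (a r) [0..<m])"
proof -
  define b where "b t = a (t mod k) (t div k mod m)" for t
  define row where "row j = a r (j mod m)" for j
  have "k > 0"
    using assms(1) by (cases k) auto
  have b_row: "b (j * k + r) = row j" for j
    using assms(2) by (simp add: b_def row_def add.commute)
  have b_periodic: "b (t + k * m) = b t" for t
    using \<open>k > 0\<close> by (simp add: b_def)
  have "cyc_changes (map (\<lambda>t. a (t mod k) (t div k)) [0..<k * m]) = cyc_changes (map b [0..<k * m])"
    by (intro arg_cong[where f = cyc_changes] map_cong)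
       (auto simp: b_def less_mult_imp_div_less mult.commute)
  also have "cyc_changes (map b [0..<k * m]) = (\<Sum>i<k * m. jump b i)"
    using b_periodic by (rule cyc_changes_periodic)
  also have "\<dots> = (\<Sum>i<m * k. jump b (i + r))"
    using sum_lessThan_shift_periodic[of "jump b" "k * m" r] jump_periodic[where g = b, OF b_periodic]
    by (simp add: mult.commute)
  also have "\<dots> \<le> (k - 1) * m + (\<Sum>j<m. of_bool (b (j * k + r) \<noteq> b (Suc j * k + r)))"
    using assms(1) by (rule sum_jump_windows_le)
  also have "(\<Sum>j<m. of_bool (b (j * k + r) \<noteq> b (Suc j * k + r))) = (\<Sum>j<m. jump row j)"
    using b_row b_row[of "Suc _"] by (simp add: jump_def del: sum_of_bool_eq mult_Suc)
  also have "\<dots> = cyc_changes (map (a r) [0..<m])"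
  proof -
    have "row (j + m) = row j" for j
      by (simp add: row_def)
    then have "(\<Sum>j<m. jump row j) = cyc_changes (map row [0..<m])"
      by (simp add: cyc_changes_periodic)
    also have "map row [0..<m] = map (a r) [0..<m]"
      by (rule map_cong) (simp_all add: row_def)
    finally show ?thesis .
  qed
  finally show ?thesis .
qed

theorem lemma5p4:
  fixes k m :: nat and a :: "nat \<Rightarrow> nat \<Rightarrow> bool"
  assumes "odd k" and "m > 0"
  shows "cyc_changes (map (\<lambda>t. a (t mod k) (t div k)) [0..<k * m])
     \<le> (k - 1) * m + Min ((\<lambda>i. cyc_changes (map (a i) [0..<m])) ` {0..<k})"
proof -
  have "k > 0"
    using assms(1) by (cases k) auto
  then have "Min ((\<lambda>i. cyc_changes (map (a i) [0..<m])) ` {0..<k}) \<in> (\<lambda>i. cyc_changes (map (a i) [0..<m])) ` {0..<k}"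
    by (intro Min_in) auto
  then obtain r where "r < k"
    and "Min ((\<lambda>i. cyc_changes (map (a i) [0..<m])) ` {0..<k}) = cyc_changes (map (a r) [0..<m])"
    by auto
  then show ?thesis
    using cyc_changes_interleave_le_row[OF assms(1) \<open>r < k\<close>] by simp
qed

end
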